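(* Fix $0<\delta<\tfrac12$ and $0<\lambda\le 1\le\Lambda$. Let $\Omega\subset\mathbb H^n$ be open, let $A\in M_n(\lambda,\Lambda,\Omega)$ be continuous at a point $z_0\in\Omega$, and assume the matrix $M:=A(z_0)$ is symplectic. Let $\alpha=\frac{Q-2}{4}+\delta$ and $g(\zeta)=-\frac1\alpha\phi_M(\zeta)^{-\alpha}$ for $\zeta\ne0$. Then there exists $\epsilon_0>0$, depending only on $\lambda,\Lambda,Q,\delta$ and the function $\epsilon\mapsto\omega_A(z_0;\epsilon)$, such that $$-\mathrm{tr}\big(A(z)\,(D^2_{\mathbb H}g)(\zeta)\big)\ge0\qquad\text{for all }z\in B_{\epsilon_0}(z_0)\cap\Omega\text{ and all }\zeta\neq0.$$ If in addition $A\in C(\Omega,\omega)$ for a function $\omega$ as below, then $\epsilon_0$ can be chosen depending only on $\lambda,\Lambda,Q,\delta,\omega$ (independent of $z_0$ and $A$).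
   Context: Points are $z=(x,t)$, $\zeta=(\xi,\tau)\in\mathbb R^{2n+1}$. $J=\begin{pmatrix}0&-\mathbb I_n\\ \mathbb I_n&0\end{pmatrix}$, $Q=2n+2$. The Heisenberg group $\mathbb H^n$ is $\mathbb R^{2n+1}$ with $(x,t)\circ(\xi,\tau)=(x+\xi,t+\tau+2\langle Jx,\xi\rangle)$; $\rho(x,t)=(|x|^4+t^2)^{1/4}$, $d(z,\zeta)=\rho(z^{-1}\circ\zeta)$ with $(x,t)^{-1}=(-x,-t)$, and $B_R(z)=\{\zeta:d(z,\zeta)<R\}$. $X_i=\partial_{x_i}+2(Jx)_i\partial_t$, $D^2_{\mathbb H}\psi=\big(\tfrac12(X_iX_j+X_jX_i)\psi\big)_{i,j=1}^{2n}$. $M_n(\lambda,\Lambda,\Omega)$ is the set of symmetric matrix-valued functions $A$ on $\Omega$ with $\det A(z)=1$ and $\lambda\mathbb I_{2n}\le A(z)\le\Lambda\mathbb I_{2n}$ for all $z\in\Omega$. A matrix $M$ is symplectic if $M^{-1}=J^tMJ$. For symmetric positive definite constant $M$, $\phi_M(x,t)=\langle M^{-1}x,x\rangle^2+t^2$. The modulus of continuity is $\omega_A(z_0;\epsilon)=\sup_{z\in B_\epsilon(z_0)\cap\Omega}\|A(z)-A(z_0)\|$ (operator norm). Given a nondecreasing $\omega:[0,1)\to[0,1)$ with $\omega(0)=\lim_{s\to0^+}\omega(s)=0$, $C(\Omega,\omega)$ is the set of continuous matrix functions $A$ on $\Omega$ with $\omega_A(z_0;\epsilon)\le\omega(\epsilon)$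 for all $z_0\in\Omega$, $0<\epsilon<1$. *)

theory Defs
  imports "HOL-Analysis.Analysis"
begin

text \<open>Horizontal coordinates x in R^{2n} are vectors indexed by 'n + 'n
  (Inl k = first block, Inr k = second block), n = CARD('n).
  Points of H^n are pairs (x,t).\<close>

type_synonym 'n hpoint = "(real^('n + 'n)) \<times> real"
type_synonym 'n hmat = "real^('n + 'n)^('n + 'n)"

definition Jmat :: "'n::finite hmat" where
  "Jmat = (\<chi> i j. (case (i, j) of
      (Inl k, Inr l) \<Rightarrow> (if k = l then -1 else 0)
    | (Inr k, Inl l) \<Rightarrow> (if k = l then 1 else 0)
    | _ \<Rightarrow> 0))"

definition Qdim :: "'n::finite itself \<Rightarrow> real" where
  "Qdim _ = 2 * real CARD('n) + 2"

definition hmult :: "'n::finite hpoint \<Rightarrow> 'n hpoint \<Rightarrow> 'n hpoint" where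
  "hmult z w = (fst z + fst w, snd z + snd w + 2 * ((Jmat *v fst z) \<bullet> fst w))"

definition hinv :: "'n::finite hpoint \<Rightarrow> 'n hpoint" where
  "hinv z = (- fst z, - snd z)"

definition hgauge :: "'n::finite hpoint \<Rightarrow> real" where
  "hgauge z = (norm (fst z) ^ 4 + (snd z)^2) powr (1/4)"

definition hdist :: "'n::finite hpoint \<Rightarrow> 'n hpoint \<Rightarrow> real" where
  "hdist z w = hgauge (hmult (hinv z) w)"

definition hball :: "'n::finite hpoint \<Rightarrow> real \<Rightarrow> 'n hpoint set" where
  "hball z R = {w. hdist z w < R}"

text \<open>Vector field X_i = d/dx_i + 2 (Jx)_i d/dt, applied to psi, as the
  directional derivative along (e_i, 2 (Jx)_i).\<close>
definition Xfield :: "('n::finite + 'n) \<Rightarrow> ('n hpoint \<Rightarrow> real) \<Rightarrow> 'n hpoint \<Rightarrow> real" where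
  "Xfield i psi z = deriv (\<lambda>s. psi (z + s *\<^sub>R (axis i 1, 2 * ((Jmat *v fst z) $ i)))) 0"

definition hhess :: "('n::finite hpoint \<Rightarrow> real) \<Rightarrow> 'n hpoint \<Rightarrow> 'n hmat" where
  "hhess psi z = (\<chi> i j. (1/2) * (Xfield i (Xfield j psi) z + Xfield j (Xfield i psi) z))"

definition Mclass :: "real \<Rightarrow> real \<Rightarrow> 'n::finite hpoint set \<Rightarrow> ('n hpoint \<Rightarrow> 'n hmat) \<Rightarrow> bool" where
  "Mclass lam Lam \<Omega> A \<longleftrightarrow> (\<forall>z\<in>\<Omega>. transpose (A z) = A z \<and> det (A z) = 1 \<and>
      (\<forall>v. lam * (v \<bullet> v) \<le> v \<bullet> (A z *v v) \<and> v \<bullet> (A z *v v) \<le> Lam * (v \<bullet> v)))"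

definition symplectic :: "'n::finite hmat \<Rightarrow> bool" where
  "symplectic M \<longleftrightarrow> invertible M \<and> matrix_inv M = transpose Jmat ** M ** Jmat"

definition phiM :: "'n::finite hmat \<Rightarrow> 'n hpoint \<Rightarrow> real" where
  "phiM M z = ((matrix_inv M *v fst z) \<bullet> fst z)^2 + (snd z)^2"

definition modcont :: "('n::finite hpoint \<Rightarrow> 'n hmat) \<Rightarrow> 'n hpoint set \<Rightarrow> 'n hpoint \<Rightarrow> real \<Rightarrow> real" where
  "modcont A \<Omega> z0 e = (SUP z \<in> hball z0 e \<inter> \<Omega>. onorm (\<lambda>v. (A z - A z0) *v v))"

definition admissible_modulus :: "(real \<Rightarrow> real) \<Rightarrow> bool" where
  "admissible_modulus w \<longleftrightarrow> mono_on {0..<1} w \<and> w ` {0..<1} \<subseteq> {0..<1} \<and> w 0 = 0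
     \<and> (w \<longlongrightarrow> 0) (at_right 0)"

definition Cclass :: "'n::finite hpoint set \<Rightarrow> (real \<Rightarrow> real) \<Rightarrow> ('n hpoint \<Rightarrow> 'n hmat) \<Rightarrow> bool" where
  "Cclass \<Omega> w A \<longleftrightarrow> continuous_on \<Omega> A \<and>
     (\<forall>z0\<in>\<Omega>. \<forall>e. 0 < e \<and> e < 1 \<longrightarrow> modcont A \<Omega> z0 e \<le> w e)"

end

theory Submission
  imports Defs "HOL-Library.Cardinality"
begin

text \<open>For a symmetric matrix N write phi = <N x, x>^2 + t^2, u = <N x, x>, a = N x, b = J x and
  V = 4 u a + 4 t b. Differentiating along the horizontal lines gives
  D2_H (- phi^(-alpha) / alpha) = phi^(-alpha-2) (phi (8 a a^T + 4 u N + 8 b b^T) - (alpha + 1) V V^T).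
  For N = M^(-1) with M symplectic, <M a, a> = <M b, b> = u and <M a, b> = 0, whence
  -tr (M D2_H g) = 16 (alpha - n/2) u phi^(-alpha-1) = 16 delta u phi^(-alpha-1).
  Replacing M by a nearby A(z) changes the bracket by at most C |A(z) - M| u phi, because
  ellipticity gives |a|^2, |b|^2 <= (Lambda^2 / lambda) u. So the sign persists as long as the
  modulus of continuity stays below 16 delta / C, that is, on a small Heisenberg ball around z0.\<close>

section \<open>The symplectic matrix\<close>

lemma sum_UNIV_Plus:
  "(\<Sum>i\<in>UNIV. f i) = (\<Sum>k\<in>UNIV. f (Inl k)) + (\<Sum>k\<in>UNIV. f (Inr k))"
  for f :: "'a::finite + 'b::finite \<Rightarrow> 'c::comm_monoid_add"
  using sum.Plus[of "UNIV::'a set" "UNIV::'b set" f] by (simp add: comp_def)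

lemma Jmat_mult_Inl: "(Jmat *v x) $ Inl k = - x $ Inr k"
  by (simp add: matrix_vector_mult_def Jmat_def sum_UNIV_Plus if_distrib if_distribR
      cong: if_cong)

lemma Jmat_mult_Inr: "(Jmat *v x) $ Inr k = x $ Inl k"
  by (simp add: matrix_vector_mult_def Jmat_def sum_UNIV_Plus if_distrib if_distribR
      cong: if_cong)

lemma Jmat_skew: "(Jmat :: 'n::finite hmat) $ j $ i = - Jmat $ i $ j"
  by (cases i; cases j) (auto simp: Jmat_def)

lemma inner_Jmat_self: "x \<bullet> (Jmat *v x) = 0"
  by (simp add: inner_vec_def sum_UNIV_Plus Jmat_mult_Inl Jmat_mult_Inr sum_negf mult.commute)

lemma norm_Jmat_mult: "norm (Jmat *v x) = norm x"
proof -
  have "(Jmat *v x) \<bullet> (Jmat *v x) = x \<bullet> x"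
    by (simp add: inner_vec_def sum_UNIV_Plus Jmat_mult_Inl Jmat_mult_Inr add.commute)
  thus ?thesis by (simp add: norm_eq_sqrt_inner)
qed

section \<open>Symmetric positive definite matrices\<close>

lemma inner_symmetric_matrix:
  fixes A :: "real^'m^'m"
  assumes "transpose A = A"
  shows "v \<bullet> (A *v w) = (A *v v) \<bullet> w"
  by (metis assms dot_lmul_matrix transpose_matrix_vector)

lemma symmetric_matrix_entry: "transpose (A::'a^'m^'m) = A \<Longrightarrow> A $ i $ j = A $ j $ i"
  by (metis transpose_def vec_lambda_beta)

lemma matrix_vector_mult_axis: "((A::real^'m^'m) *v axis i 1) $ j = A $ j $ i"
  by (simp add: matrix_vector_mult_basis column_def)

lemma norm_matrix_vector_le_of_quadratic_form_le:
  fixes A :: "real^'m^'m"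
  assumes sym: "transpose A = A" and pos: "\<forall>v. 0 \<le> v \<bullet> (A *v v)"
    and up: "\<forall>v. v \<bullet> (A *v v) \<le> L * (v \<bullet> v)" and L: "L > 0"
  shows "norm (A *v v) \<le> L * norm v"
proof -
  define w where "w = A *v v"
  define t where "t = 1 / L"
  \<comment> \<open>positivity of the form at \<open>v - w / L\<close>\<close>
  have expand: "(v - t *\<^sub>R w) \<bullet> (A *v (v - t *\<^sub>R w))
      = v \<bullet> (A *v v) - 2 * t * (w \<bullet> w) + t^2 * (w \<bullet> (A *v w))"
    using inner_symmetric_matrix[OF sym, of v w] inner_symmetric_matrix[OF sym, of w v]
    by (simp add: inner_commute w_def power2_eq_square algebra_simps)
  have "0 \<le> v \<bullet> (A *v v) - 2 * t * (w \<bullet> w) + t^2 * (w \<bullet> (A *v w))"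
    using pos expand by metis
  moreover have "w \<bullet> (A *v w) \<le> L * (w \<bullet> w)" "v \<bullet> (A *v v) \<le> L * (v \<bullet> v)"
    using up by blast+
  ultimately have "2 * t * (w \<bullet> w) \<le> L * (v \<bullet> v) + t^2 * (L * (w \<bullet> w))"
    by (smt (verit, best) mult_left_mono zero_le_power2)
  hence "w \<bullet> w \<le> L^2 * (v \<bullet> v)"
    using L by (simp add: t_def power2_eq_square field_simps)
  hence "norm w ^ 2 \<le> (L * norm v)^2"
    by (simp add: power2_norm_eq_inner power_mult_distrib)
  thus ?thesis unfolding w_def using L by (simp add: power2_le_iff_abs_le)
qed

lemma matrix_mul_matrix_inv:
  fixes M :: "real^'m^'m"
  assumes "invertible M"
  shows "M ** matrix_inv M = mat 1"
proof -
  have "\<exists>A'. M ** A' = mat 1 \<and> A' ** M = mat 1" using assms by (simp add: invertible_def)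
  hence "M ** matrix_inv M = mat 1 \<and> matrix_inv M ** M = mat 1"
    unfolding matrix_inv_def by (rule someI_ex)
  thus ?thesis by blast
qed

lemma transpose_matrix_inv_symmetric:
  fixes M :: "real^'m^'m"
  assumes "invertible M" "transpose M = M"
  shows "transpose (matrix_inv M) = matrix_inv M"
proof -
  let ?N = "matrix_inv M"
  have left: "transpose ?N ** M = mat 1"
    using matrix_mul_matrix_inv[OF assms(1)] assms(2)
    by (metis matrix_transpose_mul transpose_mat)
  have "transpose ?N = transpose ?N ** (M ** ?N)"
    using matrix_mul_matrix_inv[OF assms(1)] by simp
  also have "\<dots> = ?N" using left by (simp add: matrix_mul_assoc)
  finally show ?thesis .
qed

lemma norm_add_square_le: "norm (p + q :: 'a::real_normed_vector) ^ 2 \<le> 2 * norm p ^ 2 + 2 * norm q ^ 2"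
proof -
  have "norm (p + q) ^ 2 \<le> (norm p + norm q)^2"
    by (simp add: norm_triangle_ineq power_mono)
  also have "\<dots> \<le> 2 * norm p ^ 2 + 2 * norm q ^ 2"
    using sum_squares_bound[of "norm p" "norm q"] by (simp add: power2_eq_square algebra_simps)
  finally show ?thesis .
qed

lemma abs_quadratic_form_le:
  fixes E :: "real^'m^'m"
  assumes "\<forall>v. norm (E *v v) \<le> eta * norm v"
  shows "\<bar>v \<bullet> (E *v v)\<bar> \<le> eta * norm v ^ 2"
proof -
  have "\<bar>v \<bullet> (E *v v)\<bar> \<le> norm v * norm (E *v v)" by (rule Cauchy_Schwarz_ineq2)
  also have "\<dots> \<le> norm v * (eta * norm v)" using assms by (simp add: mult_left_mono)
  finally show ?thesis by (simp add: power2_eq_square algebra_simps)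
qed

lemma abs_trace_mult_inverse_le:
  fixes E N M :: "real^'m^'m"
  assumes E: "\<forall>v. norm (E *v v) \<le> eta * norm v" and eta: "eta \<ge> 0"
    and MN: "M ** N = mat 1" and lam: "lam > 0" and pos: "\<forall>v. lam * (v \<bullet> v) \<le> v \<bullet> (M *v v)"
  shows "\<bar>trace (E ** N)\<bar> \<le> real CARD('m) * (eta / lam)"
proof -
  have diag: "\<bar>(E ** N) $ i $ i\<bar> \<le> eta / lam" for i
  proof -
    define w where "w = N *v axis i 1"
    have "M *v w = axis i 1" using MN by (simp add: w_def matrix_vector_mul_assoc)
    hence "lam * norm w ^ 2 \<le> w \<bullet> axis i 1"
      using pos by (metis power2_norm_eq_inner)
    also have "\<dots> \<le> norm w" using Cauchy_Schwarz_ineq2[of w "axis i 1"] by simp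
    finally have "lam * norm w \<le> 1"
      by (cases "norm w = 0") (simp_all add: power2_eq_square)
    hence nw: "norm w \<le> 1 / lam" using lam by (simp add: field_simps)
    have "\<bar>(E ** N) $ i $ i\<bar> = \<bar>(E *v w) $ i\<bar>"
      by (simp add: w_def matrix_vector_mul_assoc matrix_vector_mult_axis)
    also have "\<dots> \<le> norm (E *v w)" by (rule component_le_norm_cart)
    also have "\<dots> \<le> eta * norm w" using E by blast
    also have "\<dots> \<le> eta / lam" using mult_left_mono[OF nw eta] by simp
    finally show ?thesis .
  qed
  have "\<bar>trace (E ** N)\<bar> \<le> (\<Sum>i\<in>UNIV. \<bar>(E ** N) $ i $ i\<bar>)"
    unfolding trace_def by (rule sum_abs)
  also have "\<dots> \<le> (\<Sum>i\<in>(UNIV::'m set). eta / lam)" by (rule sum_mono) (rule diag)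
  finally show ?thesis by simp
qed

lemma trace_mult_inverse_perturbed:
  fixes A M N :: "real^'m^'m"
  assumes "M ** N = mat 1"
  shows "trace (A ** N) = real CARD('m) + trace ((A - M) ** N)"
proof -
  have "trace (A ** N) = trace (N ** M) + trace (N ** (A - M))"
    by (simp add: trace_mul_sym[of A N] flip: trace_add matrix_add_ldistrib)
  thus ?thesis by (simp add: trace_mul_sym[of N] assms trace_I)
qed

lemma trace_mult_quadratic_combination:
  fixes A H N :: "real^'m^'m"
  assumes "\<And>i j. H $ i $ j = c1 * (V$i * V$j) + c2 * (8 * (a$i * a$j) + 4 * u * N$i$j + 8 * (b$i * b$j))"
  shows "trace (A ** H) = c1 * (V \<bullet> (A *v V))
    + c2 * (8 * (a \<bullet> (A *v a)) + 4 * u * trace (A ** N) + 8 * (b \<bullet> (A *v b)))"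
  by (simp add: assms trace_def matrix_matrix_mult_def inner_vec_def matrix_vector_mult_def
      sum.distrib sum_distrib_left algebra_simps)

section \<open>The horizontal Hessian of a negative power of the gauge\<close>

text \<open>\<open>phiM M = phi_form (matrix_inv M)\<close>; the Hessian computation only needs \<open>N\<close> symmetric.\<close>

definition phi_form :: "'n::finite hmat \<Rightarrow> 'n hpoint \<Rightarrow> real" where
  "phi_form N z = ((N *v fst z) \<bullet> fst z)^2 + (snd z)^2"

definition g_form :: "real \<Rightarrow> 'n::finite hmat \<Rightarrow> 'n hpoint \<Rightarrow> real" where
  "g_form al N z = - (1 / al) * phi_form N z powr (- al)"

lemma Xfield_Pair:
  "Xfield i f (x, t) = deriv (\<lambda>s. f (x + s *\<^sub>R axis i 1, t + s * (2 * (Jmat *v x) $ i))) 0"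
  by (simp add: Xfield_def algebra_simps)

lemma Xfield_eqI:
  assumes "(G has_real_derivative D) (at 0)" and "open S" and "0 \<in> S"
    and "\<And>s. s \<in> S \<Longrightarrow> G s = f (x + s *\<^sub>R axis i 1, t + s * (2 * (Jmat *v x) $ i))"
  shows "Xfield i f (x, t) = D"
  unfolding Xfield_Pair
  by (rule DERIV_imp_deriv, rule has_field_derivative_transform_within_open[OF assms(1-3)])
    (simp add: assms(4))

lemma quadratic_form_add_axis:
  fixes N :: "real^'m^'m"
  assumes "transpose N = N"
  shows "(N *v (x + s *\<^sub>R axis i 1)) \<bullet> (x + s *\<^sub>R axis i 1)
    = (N *v x) \<bullet> x + 2 * s * (N *v x) $ i + s^2 * N $ i $ i"
  using inner_symmetric_matrix[OF assms, of "axis i 1" x]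
  by (simp add: inner_axis inner_axis' matrix_vector_mult_axis power2_eq_square algebra_simps)

lemma matrix_vector_mult_add_axis_component:
  "((A::real^'m^'m) *v (x + s *\<^sub>R axis i 1)) $ j = (A *v x) $ j + s * A $ j $ i"
  by (simp add: matrix_vector_right_distrib matrix_vector_mult_scaleR matrix_vector_mult_axis)

lemma Xfield_g_form:
  fixes N :: "'n::finite hmat"
  assumes sym: "transpose N = N" and pos: "phi_form N (x, t) > 0" and al: "al > 0"
  shows "Xfield j (g_form al N) (x, t) = phi_form N (x, t) powr (- al - 1) *
      (4 * ((N *v x) \<bullet> x) * (N *v x) $ j + 4 * t * (Jmat *v x) $ j)"
proof -
  define P where "P s = ((N *v x) \<bullet> x + 2 * s * (N *v x) $ j + s^2 * N $ j $ j)^2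
    + (t + s * (2 * (Jmat *v x) $ j))^2" for s
  have P0: "P 0 = phi_form N (x, t)" by (simp add: P_def phi_form_def)
  have "(P has_real_derivative 4 * ((N *v x) \<bullet> x) * (N *v x) $ j + 4 * t * (Jmat *v x) $ j) (at 0)"
    unfolding P_def by (auto intro!: derivative_eq_intros)
  hence "((\<lambda>s. - (1 / al) * P s powr (- al)) has_real_derivative
      P 0 powr (- al - 1) * (4 * ((N *v x) \<bullet> x) * (N *v x) $ j + 4 * t * (Jmat *v x) $ j)) (at 0)"
    using pos al P0 by (auto intro!: derivative_eq_intros)
  thus ?thesis unfolding P0
    by (rule Xfield_eqI[OF _ open_UNIV UNIV_I])
      (simp add: g_form_def phi_form_def quadratic_form_add_axis[OF sym] P_def)
qed

lemma Xfield_Xfield_g_form: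
  fixes N :: "'n::finite hmat"
  assumes sym: "transpose N = N" and pos: "phi_form N (x, t) > 0" and al: "al > 0"
  defines "u \<equiv> (N *v x) \<bullet> x"
  shows "Xfield i (Xfield j (g_form al N)) (x, t) =
      (- al - 1) * phi_form N (x, t) powr (- al - 2) *
        (4 * u * (N *v x) $ i + 4 * t * (Jmat *v x) $ i) * (4 * u * (N *v x) $ j + 4 * t * (Jmat *v x) $ j)
    + phi_form N (x, t) powr (- al - 1) *
        (8 * (N *v x) $ i * (N *v x) $ j + 4 * u * N $ j $ i
         + 8 * (Jmat *v x) $ i * (Jmat *v x) $ j + 4 * t * Jmat $ j $ i)"
proof -
  let ?c = "2 * (Jmat *v x) $ i"
  define U where "U s = u + 2 * s * (N *v x) $ i + s^2 * N $ i $ i" for s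
  define P where "P s = (U s)^2 + (t + s * ?c)^2" for s
  define G where "G s = P s powr (- al - 1) * (4 * U s * ((N *v x) $ j + s * N $ j $ i)
      + 4 * (t + s * ?c) * ((Jmat *v x) $ j + s * Jmat $ j $ i))" for s
  have P0: "P 0 = phi_form N (x, t)" by (simp add: P_def U_def u_def phi_form_def)
  have "continuous_on UNIV P" unfolding P_def U_def by (intro continuous_intros)
  hence open_S: "open {s. 0 < P s}" using open_Collect_less[OF continuous_on_const] by simp
  have zero_S: "0 \<in> {s. 0 < P s}" using pos P0 by simp
  have G_eq: "G s = Xfield j (g_form al N) (x + s *\<^sub>R axis i 1, t + s * ?c)"
    if "s \<in> {s. 0 < P s}" for s
    using Xfield_g_form[OF sym _ al, of "x + s *\<^sub>R axis i 1" "t + s * ?c" j] that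
    by (simp add: G_def P_def U_def u_def phi_form_def quadratic_form_add_axis[OF sym]
        matrix_vector_mult_add_axis_component)
  have dU: "(U has_real_derivative 2 * (N *v x) $ i) (at 0)"
    unfolding U_def by (auto intro!: derivative_eq_intros)
  hence "(P has_real_derivative 4 * u * (N *v x) $ i + 4 * t * (Jmat *v x) $ i) (at 0)"
    unfolding P_def by (auto intro!: derivative_eq_intros simp: U_def)
  hence "(G has_real_derivative
      (- al - 1) * P 0 powr (- al - 1 - 1) * (4 * u * (N *v x) $ i + 4 * t * (Jmat *v x) $ i)
        * (4 * U 0 * (N *v x) $ j + 4 * t * (Jmat *v x) $ j)
      + P 0 powr (- al - 1) * (8 * (N *v x) $ i * (N *v x) $ j + 4 * U 0 * N $ j $ i
         + 4 * ?c * (Jmat *v x) $ j + 4 * t * Jmat $ j $ i)) (at 0)"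
    (is "(G has_real_derivative ?D) _")
    unfolding G_def using pos P0 by (auto intro!: derivative_eq_intros dU simp: algebra_simps)
  hence "Xfield i (Xfield j (g_form al N)) (x, t) = ?D"
    by (rule Xfield_eqI[where f = "Xfield j (g_form al N)", OF _ open_S zero_S G_eq])
  thus ?thesis by (simp add: P0 U_def algebra_simps)
qed

lemma hhess_g_form_entry:
  fixes N :: "'n::finite hmat"
  assumes sym: "transpose N = N" and pos: "phi_form N (x, t) > 0" and al: "al > 0"
  defines "a \<equiv> N *v x" and "b \<equiv> Jmat *v x" and "u \<equiv> (N *v x) \<bullet> x"
    and "V \<equiv> (4 * ((N *v x) \<bullet> x)) *\<^sub>R (N *v x) + (4 * t) *\<^sub>R (Jmat *v x)" and "ph \<equiv> phi_form N (x, t)"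
  shows "hhess (g_form al N) (x, t) $ i $ j = (- al - 1) * ph powr (- al - 2) * (V$i * V$j)
      + ph powr (- al - 1) * (8 * (a$i * a$j) + 4 * u * N$i$j + 8 * (b$i * b$j))"
  using Xfield_Xfield_g_form[OF sym pos al, of i j] Xfield_Xfield_g_form[OF sym pos al, of j i]
    symmetric_matrix_entry[OF sym, of i j] Jmat_skew[of i j]
  \<comment> \<open>the skew term \<open>4 t J\<close> of \<open>X\<^sub>i X\<^sub>j\<close> cancels in the symmetrization\<close>
  unfolding hhess_def by (simp add: a_def b_def u_def V_def ph_def algebra_simps)

lemma neg_trace_hhess_g_form:
  fixes N :: "'n::finite hmat"
  assumes sym: "transpose N = N" and pos: "phi_form N (x, t) > 0" and al: "al > 0"
  defines "a \<equiv> N *v x" and "b \<equiv> Jmat *v x" and "u \<equiv> (N *v x) \<bullet> x"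
    and "V \<equiv> (4 * ((N *v x) \<bullet> x)) *\<^sub>R (N *v x) + (4 * t) *\<^sub>R (Jmat *v x)" and "ph \<equiv> phi_form N (x, t)"
  shows "- trace (A ** hhess (g_form al N) (x, t)) = ph powr (- al - 2) *
    ((al + 1) * (V \<bullet> (A *v V)) - ph * (8 * (a \<bullet> (A *v a)) + 4 * u * trace (A ** N) + 8 * (b \<bullet> (A *v b))))"
proof -
  have "trace (A ** hhess (g_form al N) (x, t)) = (- al - 1) * ph powr (- al - 2) * (V \<bullet> (A *v V))
      + ph powr (- al - 1) * (8 * (a \<bullet> (A *v a)) + 4 * u * trace (A ** N) + 8 * (b \<bullet> (A *v b)))"
    by (rule trace_mult_quadratic_combination)
      (simp add: hhess_g_form_entry[OF sym pos al] a_def b_def u_def V_def ph_def)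
  moreover have "ph powr (- al - 1) = ph powr (1 + (- al - 2))"
    by (rule arg_cong[where f = "\<lambda>e. ph powr e"]) simp
  also have "\<dots> = ph * ph powr (- al - 2)" unfolding powr_add using pos by (simp add: ph_def)
  ultimately show ?thesis by (simp add: algebra_simps)
qed

section \<open>Sign of the trace against a nearby coefficient matrix\<close>

lemma symplectic_inverse_forms:
  fixes M :: "'n::finite hmat" and x :: "real^('n + 'n)"
  assumes sp: "symplectic M" and sym: "transpose M = M"
  defines "a \<equiv> matrix_inv M *v x" and "b \<equiv> Jmat *v x"
  shows "a \<bullet> (M *v a) = a \<bullet> x" and "b \<bullet> (M *v b) = a \<bullet> x"
    and "a \<bullet> (M *v b) = 0" and "b \<bullet> (M *v a) = 0"
proof -
  have inv: "invertible M" and N_eq: "matrix_inv M = transpose Jmat ** M ** Jmat"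
    using sp by (auto simp: symplectic_def)
  have Ma: "M *v a = x"
    by (simp add: a_def matrix_vector_mul_assoc matrix_mul_matrix_inv[OF inv])
  show "a \<bullet> (M *v a) = a \<bullet> x" by (simp add: Ma)
  have "a = transpose Jmat *v (M *v b)"
    by (simp add: a_def b_def N_eq matrix_vector_mul_assoc matrix_mul_assoc)
  hence "a \<bullet> x = (M *v b) \<bullet> b" by (simp add: dot_lmul_matrix b_def)
  thus "b \<bullet> (M *v b) = a \<bullet> x" by (simp add: inner_commute)
  show "b \<bullet> (M *v a) = 0" using inner_Jmat_self[of x] by (simp add: Ma b_def inner_commute)
  thus "a \<bullet> (M *v b) = 0" using inner_symmetric_matrix[OF sym, of a b] by (simp add: inner_commute)
qed

lemma inverse_form_bounds:
  fixes M :: "real^'m^'m" and x :: "real^'m"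
  assumes inv: "invertible M" and sym: "transpose M = M" and lam: "0 < lam" and Lam: "1 \<le> Lam"
    and lo: "\<forall>v. lam * (v \<bullet> v) \<le> v \<bullet> (M *v v)" and up: "\<forall>v. v \<bullet> (M *v v) \<le> Lam * (v \<bullet> v)"
  defines "a \<equiv> matrix_inv M *v x"
  shows "lam * norm a ^ 2 \<le> a \<bullet> x" and "norm a ^ 2 \<le> Lam^2 / lam * (a \<bullet> x)"
    and "norm x ^ 2 \<le> Lam^2 / lam * (a \<bullet> x)"
proof -
  have Ma: "M *v a = x"
    by (simp add: a_def matrix_vector_mul_assoc matrix_mul_matrix_inv[OF inv])
  show lo_a: "lam * norm a ^ 2 \<le> a \<bullet> x"
    using lo Ma by (metis power2_norm_eq_inner)
  have "norm x \<le> Lam * norm a"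
    using norm_matrix_vector_le_of_quadratic_form_le[OF sym _ up, of a] lo lam Lam Ma
    by (smt (verit) inner_ge_zero mult_nonneg_nonneg)
  hence "norm x ^ 2 \<le> Lam^2 * norm a ^ 2" by (metis norm_ge_zero power_mono power_mult_distrib)
  also have "\<dots> \<le> Lam^2 / lam * (a \<bullet> x)"
    using mult_left_mono[OF lo_a, of "Lam^2 / lam"] lam by (simp add: field_simps)
  finally show "norm x ^ 2 \<le> Lam^2 / lam * (a \<bullet> x)" .
  have "1 \<le> Lam^2" using Lam by simp
  hence "norm a ^ 2 \<le> Lam^2 * norm a ^ 2" using mult_right_mono[of 1 "Lam^2" "norm a ^ 2"] by simp
  also have "\<dots> \<le> Lam^2 / lam * (a \<bullet> x)"
    using mult_left_mono[OF lo_a, of "Lam^2 / lam"] lam by (simp add: field_simps)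
  finally show "norm a ^ 2 \<le> Lam^2 / lam * (a \<bullet> x)" .
qed

lemma phi_form_matrix_inv_pos:
  fixes M :: "'n::finite hmat"
  assumes inv: "invertible M" and sym: "transpose M = M" and lam: "0 < lam" and Lam: "1 \<le> Lam"
    and lo: "\<forall>v. lam * (v \<bullet> v) \<le> v \<bullet> (M *v v)" and up: "\<forall>v. v \<bullet> (M *v v) \<le> Lam * (v \<bullet> v)"
    and nonzero: "(x, t) \<noteq> 0"
  shows "0 < phi_form (matrix_inv M) (x, t)"
proof (cases "x = 0")
  case True
  thus ?thesis using nonzero by (simp add: phi_form_def zero_prod_def)
next
  case False
  hence "matrix_inv M *v x \<noteq> 0"
    by (metis inv matrix_mul_matrix_inv matrix_vector_mul_assoc matrix_vector_mul_lid
        matrix_vector_mult_0_right)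
  hence "0 < (matrix_inv M *v x) \<bullet> x"
    using inverse_form_bounds(1)[OF inv sym lam Lam lo up, of x] lam
    by (smt (verit) mult_pos_pos zero_less_norm_iff zero_less_power)
  thus ?thesis by (simp add: phi_form_def add_pos_nonneg)
qed

lemma norm_gradient_square_le:
  fixes M :: "'n::finite hmat" and x :: "real^('n + 'n)"
  assumes inv: "invertible M" and sym: "transpose M = M" and lam: "0 < lam" and Lam: "1 \<le> Lam"
    and lo: "\<forall>v. lam * (v \<bullet> v) \<le> v \<bullet> (M *v v)" and up: "\<forall>v. v \<bullet> (M *v v) \<le> Lam * (v \<bullet> v)"
  defines "u \<equiv> (matrix_inv M *v x) \<bullet> x"
  shows "norm ((4 * u) *\<^sub>R (matrix_inv M *v x) + (4 * t) *\<^sub>R (Jmat *v x)) ^ 2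
    \<le> 32 * (Lam^2 / lam) * u * phi_form (matrix_inv M) (x, t)"
proof -
  note bounds = inverse_form_bounds[OF inv sym lam Lam lo up, of x, folded u_def]
  have "norm ((4 * u) *\<^sub>R (matrix_inv M *v x) + (4 * t) *\<^sub>R (Jmat *v x)) ^ 2
      \<le> 2 * norm ((4 * u) *\<^sub>R (matrix_inv M *v x)) ^ 2 + 2 * norm ((4 * t) *\<^sub>R (Jmat *v x)) ^ 2"
    by (rule norm_add_square_le)
  also have "\<dots> = 32 * (u^2 * norm (matrix_inv M *v x) ^ 2) + 32 * (t^2 * norm x ^ 2)"
    by (simp add: power_mult_distrib norm_Jmat_mult)
  also have "\<dots> \<le> 32 * (u^2 * (Lam^2 / lam * u)) + 32 * (t^2 * (Lam^2 / lam * u))"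
    using bounds(2,3) by (intro add_mono mult_left_mono) auto
  finally show ?thesis by (simp add: phi_form_def u_def inner_commute algebra_simps add_divide_distrib)
qed

definition perturbation_constant :: "real \<Rightarrow> real \<Rightarrow> real \<Rightarrow> real \<Rightarrow> real" where
  "perturbation_constant lam Lam al n = 32 * (Lam^2 / lam) * (al + 1) + 16 * (Lam^2 / lam) + 8 * n / lam"

lemma perturbed_bracket_nonneg:
  fixes eta lam Lam n al delta u ph eV ea eb eT :: real
  defines "K \<equiv> Lam^2 / lam"
  assumes eta: "0 \<le> eta" and al: "al = n / 2 + delta" "0 < al" and u: "0 \<le> u" and ph: "0 \<le> ph"
    and small: "eta * perturbation_constant lam Lam al n \<le> 16 * delta"
    and eV: "\<bar>eV\<bar> \<le> eta * (32 * K * u * ph)" and ea: "\<bar>ea\<bar> \<le> eta * (K * u)"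
    and eb: "\<bar>eb\<bar> \<le> eta * (K * u)" and eT: "\<bar>eT\<bar> \<le> 2 * n * (eta / lam)"
  shows "0 \<le> (al + 1) * (16 * u * ph + eV) - ph * (8 * (u + ea) + 4 * u * (2 * n + eT) + 8 * (u + eb))"
proof -
  \<comment> \<open>with all errors zero the bracket is \<open>16 \<delta> u ph\<close>; this margin absorbs the errors\<close>
  have "\<bar>(al + 1) * eV - ph * (8 * ea + 4 * u * eT + 8 * eb)\<bar>
      \<le> (al + 1) * \<bar>eV\<bar> + ph * (8 * \<bar>ea\<bar> + 4 * u * \<bar>eT\<bar> + 8 * \<bar>eb\<bar>)"
  proof -
    have "\<bar>8 * ea + 4 * u * eT + 8 * eb\<bar> \<le> \<bar>8 * ea\<bar> + \<bar>4 * u * eT\<bar> + \<bar>8 * eb\<bar>"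
      using abs_triangle_ineq[of "8 * ea + 4 * u * eT" "8 * eb"] abs_triangle_ineq[of "8 * ea" "4 * u * eT"]
      by linarith
    also have "\<dots> = 8 * \<bar>ea\<bar> + 4 * u * \<bar>eT\<bar> + 8 * \<bar>eb\<bar>" using u by (simp add: abs_mult)
    finally have "\<bar>ph * (8 * ea + 4 * u * eT + 8 * eb)\<bar> \<le> ph * (8 * \<bar>ea\<bar> + 4 * u * \<bar>eT\<bar> + 8 * \<bar>eb\<bar>)"
      using ph by (simp add: abs_mult mult_left_mono)
    moreover have "\<bar>(al + 1) * eV\<bar> = (al + 1) * \<bar>eV\<bar>" using al(2) by (simp add: abs_mult)
    ultimately show ?thesis using abs_triangle_ineq4[of "(al + 1) * eV"] by linarith
  qed
  also have "\<dots> \<le> (al + 1) * (eta * (32 * K * u * ph))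
      + ph * (8 * (eta * (K * u)) + 4 * u * (2 * n * (eta / lam)) + 8 * (eta * (K * u)))"
    using al(2) u ph eV ea eb eT by (intro add_mono mult_left_mono order_refl) auto
  also have "\<dots> = eta * perturbation_constant lam Lam al n * (u * ph)"
    by (simp add: perturbation_constant_def K_def algebra_simps)
  also have "\<dots> \<le> 16 * delta * (u * ph)"
    using small u ph by (simp add: mult_right_mono)
  finally have "- (16 * delta * (u * ph)) \<le> (al + 1) * eV - ph * (8 * ea + 4 * u * eT + 8 * eb)"
    by (simp add: abs_le_iff)
  moreover have "(al + 1) * (16 * u * ph + eV) - ph * (8 * (u + ea) + 4 * u * (2 * n + eT) + 8 * (u + eb))
      = 16 * delta * (u * ph) + ((al + 1) * eV - ph * (8 * ea + 4 * u * eT + 8 * eb))"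
    by (simp add: al(1) algebra_simps)
  ultimately show ?thesis by linarith
qed

lemma neg_trace_hhess_g_form_nonneg:
  fixes M A :: "'n::finite hmat"
  assumes sp: "symplectic M" and sym: "transpose M = M"
    and lo: "\<forall>v. lam * (v \<bullet> v) \<le> v \<bullet> (M *v v)" and up: "\<forall>v. v \<bullet> (M *v v) \<le> Lam * (v \<bullet> v)"
    and lam: "0 < lam" and Lam: "1 \<le> Lam"
    and close: "\<forall>v. norm ((A - M) *v v) \<le> eta * norm v" and eta: "0 \<le> eta"
    and small: "eta * perturbation_constant lam Lam al (real CARD('n)) \<le> 16 * delta"
    and al: "al = real CARD('n) / 2 + delta" and delta: "0 < delta"
    and nonzero: "(x, t) \<noteq> 0"
  shows "0 \<le> - trace (A ** hhess (g_form al (matrix_inv M)) (x, t))"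
proof -
  define N where "N = matrix_inv M"
  define a where "a = N *v x"
  define b where "b = Jmat *v x"
  define u where "u = a \<bullet> x"
  define V where "V = (4 * u) *\<^sub>R a + (4 * t) *\<^sub>R b"
  define ph where "ph = phi_form N (x, t)"
  define K where "K = Lam^2 / lam"
  define E where "E = A - M"
  have inv: "invertible M" using sp by (simp add: symplectic_def)
  have symN: "transpose N = N" unfolding N_def by (rule transpose_matrix_inv_symmetric[OF inv sym])
  have MN: "M ** N = mat 1" unfolding N_def by (rule matrix_mul_matrix_inv[OF inv])
  have forms: "a \<bullet> (M *v a) = u" "b \<bullet> (M *v b) = u" "a \<bullet> (M *v b) = 0" "b \<bullet> (M *v a) = 0"
    using symplectic_inverse_forms[OF sp sym, of x] by (simp_all add: a_def b_def u_def N_def)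
  have bounds: "lam * norm a ^ 2 \<le> u" "norm a ^ 2 \<le> K * u" "norm x ^ 2 \<le> K * u"
    using inverse_form_bounds[OF inv sym lam Lam lo up, of x] by (simp_all add: a_def u_def N_def K_def)
  have u: "0 \<le> u" using bounds(1) lam by (smt (verit) mult_nonneg_nonneg zero_le_power2)
  have ph_eq: "ph = u^2 + t^2" by (simp add: ph_def phi_form_def u_def a_def inner_commute)
  have ph: "0 < ph"
    unfolding ph_def N_def by (rule phi_form_matrix_inv_pos[OF inv sym lam Lam lo up nonzero])
  have V_bound: "norm V ^ 2 \<le> 32 * K * u * ph"
    using norm_gradient_square_le[OF inv sym lam Lam lo up, of x t]
    by (simp add: V_def a_def b_def u_def ph_def N_def K_def)
  have E_bound: "\<forall>v. norm (E *v v) \<le> eta * norm v" using close by (simp add: E_def)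
  have bracket: "0 \<le> (al + 1) * (16 * u * ph + V \<bullet> (E *v V))
      - ph * (8 * (u + a \<bullet> (E *v a)) + 4 * u * (2 * real CARD('n) + trace (E ** N))
              + 8 * (u + b \<bullet> (E *v b)))"
  proof (rule perturbed_bracket_nonneg[OF eta al _ u _ small, folded K_def])
    show "\<bar>V \<bullet> (E *v V)\<bar> \<le> eta * (32 * K * u * ph)"
      using abs_quadratic_form_le[OF E_bound, of V] V_bound eta by (meson mult_left_mono order_trans)
    show "\<bar>a \<bullet> (E *v a)\<bar> \<le> eta * (K * u)"
      using abs_quadratic_form_le[OF E_bound, of a] bounds(2) eta by (meson mult_left_mono order_trans)
    show "\<bar>b \<bullet> (E *v b)\<bar> \<le> eta * (K * u)"
      using abs_quadratic_form_le[OF E_bound, of b] bounds(3) eta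
      by (metis b_def norm_Jmat_mult mult_left_mono order_trans)
    show "\<bar>trace (E ** N)\<bar> \<le> 2 * real CARD('n) * (eta / lam)"
      using abs_trace_mult_inverse_le[OF E_bound eta MN lam lo] by simp
  qed (use al delta ph in auto)
  have "V \<bullet> (M *v V) = 16 * u * ph"
    by (simp add: V_def forms ph_eq power2_eq_square algebra_simps)
  hence A_forms: "V \<bullet> (A *v V) = 16 * u * ph + V \<bullet> (E *v V)"
    "a \<bullet> (A *v a) = u + a \<bullet> (E *v a)" "b \<bullet> (A *v b) = u + b \<bullet> (E *v b)"
    by (simp_all add: E_def forms matrix_vector_mult_diff_rdistrib inner_diff_right)
  have A_trace: "trace (A ** N) = 2 * real CARD('n) + trace (E ** N)"
    using trace_mult_inverse_perturbed[OF MN, of A] by (simp add: E_def)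
  have "- trace (A ** hhess (g_form al N) (x, t)) = ph powr (- al - 2) *
    ((al + 1) * (V \<bullet> (A *v V)) - ph * (8 * (a \<bullet> (A *v a)) + 4 * u * trace (A ** N) + 8 * (b \<bullet> (A *v b))))"
    using neg_trace_hhess_g_form[OF symN ph[unfolded ph_def], of al A] al delta
    unfolding a_def b_def u_def V_def ph_def by simp
  thus ?thesis using bracket ph by (simp add: A_forms A_trace N_def[symmetric])
qed

section \<open>Heisenberg balls and the modulus of continuity\<close>

lemma matrix_vector_mult_uminus_right: "(A::real^'m^'k) *v (- x) = - (A *v x)"
  by (simp add: vec_eq_iff matrix_vector_mult_def sum_negf)

lemma hmult_hinv_Pair: "hmult (hinv (x0, t0)) (x, t) = (x - x0, t - t0 - 2 * ((Jmat *v x0) \<bullet> x))"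
  by (simp add: hmult_def hinv_def matrix_vector_mult_uminus_right)

lemma center_mem_hball: "0 < e \<Longrightarrow> z0 \<in> hball z0 e"
  by (cases z0) (simp add: hball_def hdist_def hgauge_def hmult_hinv_Pair inner_commute inner_Jmat_self)

lemma less_power4_of_powr_less:
  fixes y e :: real
  assumes "0 \<le> y" "y powr (1/4) < e"
  shows "y < e ^ 4"
proof (cases "y = 0")
  case True
  thus ?thesis using assms by simp
next
  case False
  hence "y = (y powr (1/4)) ^ 4" using assms(1) powr_power[of y "1/4" 4] by simp
  also have "\<dots> < e ^ 4" using assms by (intro power_strict_mono) auto
  finally show ?thesis .
qed

lemma dist_le_of_mem_hball:
  fixes z z0 :: "'n::finite hpoint"
  assumes "z \<in> hball z0 e" and e: "0 < e" "e \<le> 1"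
  shows "dist z z0 \<le> e * (2 + 2 * norm (fst z0))"
proof -
  obtain x t x0 t0 where z: "z = (x, t)" and z0: "z0 = (x0, t0)" by (cases z, cases z0)
  define S where "S = t - t0 - 2 * ((Jmat *v x0) \<bullet> x)"
  have "(norm (x - x0) ^ 4 + S^2) powr (1/4) < e"
    using assms(1) by (simp add: hball_def hdist_def hgauge_def z z0 hmult_hinv_Pair S_def)
  hence lt: "norm (x - x0) ^ 4 + S^2 < e ^ 4" by (rule less_power4_of_powr_less[rotated]) simp
  moreover have "0 \<le> norm (x - x0) ^ 4" "0 \<le> S^2" by simp_all
  ultimately have "norm (x - x0) ^ 4 < e ^ 4" "S^2 < e ^ 4" by linarith+
  hence dx: "norm (x - x0) < e" using power_less_imp_less_base[of "norm (x - x0)" 4 e] e by simp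
  have "\<bar>S\<bar>^2 < (e^2)^2" using \<open>S^2 < e ^ 4\<close> by (simp add: power2_abs flip: power_mult)
  hence "\<bar>S\<bar> < e^2" by (rule power2_less_imp_less) simp
  moreover have "e^2 \<le> e" using e by (simp add: power2_eq_square mult_left_le)
  ultimately have dS: "\<bar>S\<bar> \<le> e" by simp
  \<comment> \<open>the symplectic term only sees the increment \<open>x - x0\<close>, since \<open>J x0 \<bullet> x0 = 0\<close>\<close>
  have "(Jmat *v x0) \<bullet> x = (Jmat *v x0) \<bullet> (x - x0)"
    using inner_Jmat_self[of x0] by (simp add: inner_diff_right inner_commute)
  hence "\<bar>(Jmat *v x0) \<bullet> x\<bar> \<le> norm x0 * norm (x - x0)"
    using Cauchy_Schwarz_ineq2[of "Jmat *v x0" "x - x0"] by (simp add: norm_Jmat_mult)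
  also have "\<dots> \<le> norm x0 * e" using dx by (simp add: mult_left_mono)
  finally have "\<bar>t - t0\<bar> \<le> e + 2 * (norm x0 * e)" using dS unfolding S_def by linarith
  moreover have "dist z z0 \<le> norm (x - x0) + \<bar>t - t0\<bar>"
    using norm_Pair_le[of "x - x0" "t - t0"] by (simp add: dist_norm z z0)
  ultimately show ?thesis using dx by (simp add: z0 algebra_simps)
qed

lemma onorm_matrix_vector_le:
  fixes X :: "real^'m^'m"
  shows "onorm (\<lambda>v. X *v v) \<le> real CARD('m) * real CARD('m) * norm X"
proof -
  have "\<bar>X $ i $ j\<bar> \<le> norm X" for i j
    using component_le_norm_cart[of "X $ i" j] Finite_Cartesian_Product.norm_nth_le[of X i] by simp
  thus ?thesis using onorm_le_matrix_component[of X "norm X"] by simp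
qed

lemma Mclass_norm_le:
  assumes "Mclass lam Lam \<Omega> A" "z \<in> \<Omega>" "0 < lam" "0 < Lam"
  shows "norm (A z *v v) \<le> Lam * norm v"
proof -
  have sym: "transpose (A z) = A z"
    and bounds: "\<forall>v. lam * (v \<bullet> v) \<le> v \<bullet> (A z *v v) \<and> v \<bullet> (A z *v v) \<le> Lam * (v \<bullet> v)"
    using assms(1,2) by (auto simp: Mclass_def)
  have "\<forall>v. 0 \<le> v \<bullet> (A z *v v)"
    using bounds assms(3) by (meson inner_ge_zero mult_nonneg_nonneg order_trans less_imp_le)
  thus ?thesis using norm_matrix_vector_le_of_quadratic_form_le[OF sym] bounds assms(4) by blast
qed

lemma onorm_le_modcont:
  assumes "Mclass lam Lam \<Omega> A" "z0 \<in> \<Omega>" "z \<in> hball z0 e \<inter> \<Omega>" "0 < lam" "0 < Lam"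
  shows "onorm (\<lambda>v. (A z - A z0) *v v) \<le> modcont A \<Omega> z0 e"
  unfolding modcont_def
proof (rule cSUP_upper[OF assms(3)], rule bdd_aboveI2)
  fix y assume "y \<in> hball z0 e \<inter> \<Omega>"
  show "onorm (\<lambda>v. (A y - A z0) *v v) \<le> 2 * Lam"
  proof (rule onorm_le)
    fix v
    have "norm ((A y - A z0) *v v) \<le> norm (A y *v v) + norm (A z0 *v v)"
      by (simp add: matrix_vector_mult_diff_rdistrib norm_triangle_ineq4)
    also have "\<dots> \<le> Lam * norm v + Lam * norm v"
      using Mclass_norm_le[OF assms(1) _ assms(4,5)] \<open>y \<in> _\<close> assms(2) by (intro add_mono) auto
    finally show "norm ((A y - A z0) *v v) \<le> 2 * Lam * norm v" by simp
  qed
qed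

lemma ex_modcont_le:
  fixes A :: "'n::finite hpoint \<Rightarrow> 'n hmat"
  assumes "continuous (at z0 within \<Omega>) A" "z0 \<in> \<Omega>" "0 < eta"
  shows "\<exists>e>0. modcont A \<Omega> z0 e \<le> eta"
proof -
  define c where "c = real CARD('n + 'n) * real CARD('n + 'n)"
  have c: "c > 0" by (simp add: c_def)
  obtain d where d: "d > 0" "\<forall>z\<in>\<Omega>. dist z z0 < d \<longrightarrow> dist (A z) (A z0) < eta / c"
    using assms(1,3) c unfolding continuous_within_eps_delta by (meson divide_pos_pos)
  define K where "K = 2 + 2 * norm (fst z0)"
  have K: "K > 0" by (simp add: K_def add_pos_nonneg)
  define e where "e = min (1/2) (d / (2 * K))"
  have e: "0 < e" "e \<le> 1" using d K by (auto simp: e_def)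
  have "modcont A \<Omega> z0 e \<le> eta"
    unfolding modcont_def
  proof (rule cSUP_least)
    show "hball z0 e \<inter> \<Omega> \<noteq> {}" using center_mem_hball[OF e(1)] assms(2) by blast
  next
    fix z assume z: "z \<in> hball z0 e \<inter> \<Omega>"
    have "dist z z0 \<le> e * K" using dist_le_of_mem_hball[of z z0 e] z e by (simp add: K_def)
    also have "\<dots> \<le> d / (2 * K) * K" using K by (intro mult_right_mono) (auto simp: e_def)
    also have "\<dots> < d" using K d by (simp add: field_simps)
    finally have "norm (A z - A z0) < eta / c" using d z by (simp add: dist_norm)
    moreover have "onorm (\<lambda>v. (A z - A z0) *v v) \<le> c * norm (A z - A z0)"
      unfolding c_def by (rule onorm_matrix_vector_le)
    ultimately show "onorm (\<lambda>v. (A z - A z0) *v v) \<le> eta" using c by (simp add: field_simps)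
  qed
  thus ?thesis using e by blast
qed


section \<open>The fundamental solution near a symplectic point\<close>

definition perturbation_tolerance :: "real \<Rightarrow> real \<Rightarrow> real \<Rightarrow> real \<Rightarrow> real" where
  "perturbation_tolerance lam Lam delta n = 16 * delta / perturbation_constant lam Lam (n / 2 + delta) n"

lemma perturbation_constant_pos:
  assumes "0 < lam" "0 \<le> al" "0 < n"
  shows "0 < perturbation_constant lam Lam al n"
proof -
  have "0 \<le> 32 * (Lam^2 / lam) * (al + 1) + 16 * (Lam^2 / lam)" using assms by simp
  moreover have "0 < 8 * n / lam" using assms by simp
  ultimately show ?thesis unfolding perturbation_constant_def by linarith
qed

lemma perturbation_tolerance_pos:
  "0 < lam \<Longrightarrow> 0 < delta \<Longrightarrow> 0 < n \<Longrightarrow> 0 < perturbation_tolerance lam Lam delta n"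
  unfolding perturbation_tolerance_def by (simp add: perturbation_constant_pos)

lemma neg_trace_hhess_g_form_nonneg_Mclass:
  fixes A :: "'n::finite hpoint \<Rightarrow> 'n hmat"
  assumes MC: "Mclass lam Lam \<Omega> A" and "z0 \<in> \<Omega>" and sp: "symplectic (A z0)"
    and lam: "0 < lam" and Lam: "1 \<le> Lam" and delta: "0 < delta"
    and close: "onorm (\<lambda>v. (A z - A z0) *v v) \<le> perturbation_tolerance lam Lam delta (real CARD('n))"
    and "\<zeta> \<noteq> 0"
  shows "0 \<le> - trace (A z ** hhess (g_form (real CARD('n) / 2 + delta) (matrix_inv (A z0))) \<zeta>)"
proof -
  define eta where "eta = perturbation_tolerance lam Lam delta (real CARD('n))"
  have eta: "0 < eta" using perturbation_tolerance_pos[OF lam delta] by (simp add: eta_def)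
  have "0 < perturbation_constant lam Lam (real CARD('n) / 2 + delta) (real CARD('n))"
    using perturbation_constant_pos lam delta by simp
  hence "eta * perturbation_constant lam Lam (real CARD('n) / 2 + delta) (real CARD('n)) = 16 * delta"
    by (simp add: eta_def perturbation_tolerance_def)
  moreover have "\<forall>v. norm ((A z - A z0) *v v) \<le> eta * norm v"
  proof
    fix v
    have "norm ((A z - A z0) *v v) \<le> onorm (\<lambda>v. (A z - A z0) *v v) * norm v"
      by (rule onorm) simp
    also have "\<dots> \<le> eta * norm v" using close by (simp add: eta_def mult_right_mono)
    finally show "norm ((A z - A z0) *v v) \<le> eta * norm v" .
  qed
  moreover have "transpose (A z0) = A z0" "\<forall>v. lam * (v \<bullet> v) \<le> v \<bullet> (A z0 *v v)"
    "\<forall>v. v \<bullet> (A z0 *v v) \<le> Lam * (v \<bullet> v)"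
    using MC \<open>z0 \<in> \<Omega>\<close> by (auto simp: Mclass_def)
  moreover obtain x t where "\<zeta> = (x, t)" by (cases \<zeta>)
  ultimately show ?thesis
    using neg_trace_hhess_g_form_nonneg[OF sp, of lam Lam "A z" eta "real CARD('n) / 2 + delta" delta x t]
      lam Lam eta delta \<open>\<zeta> \<noteq> 0\<close> by simp
qed

lemma neg_trace_hhess_phiM_power_nonneg_on_hball:
  fixes A :: "'n::finite hpoint \<Rightarrow> 'n hmat"
  assumes MC: "Mclass lam Lam \<Omega> A" and z0: "z0 \<in> \<Omega>" and sp: "symplectic (A z0)"
    and lam: "0 < lam" and Lam: "1 \<le> Lam" and delta: "0 < delta"
    and small: "modcont A \<Omega> z0 e \<le> perturbation_tolerance lam Lam delta (real CARD('n))"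
  shows "let alpha = (Qdim TYPE('n) - 2) / 4 + delta;
            g = (\<lambda>\<zeta>. - (1 / alpha) * phiM (A z0) \<zeta> powr (- alpha))
        in \<forall>z \<in> hball z0 e \<inter> \<Omega>. \<forall>\<zeta>. \<zeta> \<noteq> 0 \<longrightarrow> - trace (A z ** hhess g \<zeta>) \<ge> 0"
proof -
  have "(\<lambda>\<zeta>. - (1 / ((Qdim TYPE('n) - 2) / 4 + delta)) * phiM (A z0) \<zeta> powr (- ((Qdim TYPE('n) - 2) / 4 + delta)))
      = g_form (real CARD('n) / 2 + delta) (matrix_inv (A z0))"
    by (simp add: fun_eq_iff g_form_def phi_form_def phiM_def Qdim_def)
  moreover have "onorm (\<lambda>v. (A z - A z0) *v v) \<le> perturbation_tolerance lam Lam delta (real CARD('n))"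
    if "z \<in> hball z0 e \<inter> \<Omega>" for z
    using onorm_le_modcont[OF MC z0 that lam] Lam small by simp
  ultimately show ?thesis
    using neg_trace_hhess_g_form_nonneg_Mclass[OF MC z0 sp lam Lam delta] by (simp add: Let_def)
qed

lemma ex_radius_for_modulus:
  fixes w :: "real \<Rightarrow> real"
  assumes lam: "0 < lam" and Lam: "1 \<le> Lam" and delta: "0 < delta"
  shows "\<exists>eps0 > 0. \<forall>(\<Omega> :: 'n::finite hpoint set) A z0.
       open \<Omega> \<and> z0 \<in> \<Omega> \<and> Mclass lam Lam \<Omega> A \<and> continuous (at z0 within \<Omega>) A
       \<and> symplectic (A z0) \<and> (\<forall>e>0. modcont A \<Omega> z0 e = w e) \<longrightarrow>
       (let alpha = (Qdim TYPE('n) - 2) / 4 + delta;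
            g = (\<lambda>\<zeta>. - (1 / alpha) * phiM (A z0) \<zeta> powr (- alpha))
        in \<forall>z \<in> hball z0 eps0 \<inter> \<Omega>. \<forall>\<zeta>. \<zeta> \<noteq> 0 \<longrightarrow> - trace (A z ** hhess g \<zeta>) \<ge> 0)"
proof -
  define tol where "tol = perturbation_tolerance lam Lam delta (real CARD('n))"
  have tol: "0 < tol" using perturbation_tolerance_pos lam delta by (simp add: tol_def)
  show ?thesis
  proof (cases "\<exists>e>0. w e \<le> tol")
    case True
    then obtain e where e: "e > 0" "w e \<le> tol" by blast
    show ?thesis
      by (intro exI[of _ e] conjI allI impI; (rule neg_trace_hhess_phiM_power_nonneg_on_hball[of lam Lam])?)
        (use e lam Lam delta in \<open>auto simp: tol_def\<close>)
  next
    \<comment> \<open>then no field has modulus \<open>w\<close>, since continuity makes the modulus eventually small\<close>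
    case False
    have no_field: "\<not> (continuous (at z0 within \<Omega>) A \<and> z0 \<in> \<Omega> \<and> (\<forall>e>0. modcont A \<Omega> z0 e = w e))"
      for \<Omega> and A :: "'n hpoint \<Rightarrow> 'n hmat" and z0
      using False ex_modcont_le[OF _ _ tol, of z0 \<Omega> A] by force
    show ?thesis using no_field zero_less_one by blast
  qed
qed

lemma ex_uniform_radius_for_admissible_modulus:
  fixes w :: "real \<Rightarrow> real"
  assumes lam: "0 < lam" and Lam: "1 \<le> Lam" and delta: "0 < delta" and w: "admissible_modulus w"
  shows "\<exists>eps0 > 0. \<forall>(\<Omega> :: 'n::finite hpoint set) A z0.
       open \<Omega> \<and> z0 \<in> \<Omega> \<and> Mclass lam Lam \<Omega> A \<and> Cclass \<Omega> w A \<and> symplectic (A z0) \<longrightarrow>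
       (let alpha = (Qdim TYPE('n) - 2) / 4 + delta;
            g = (\<lambda>\<zeta>. - (1 / alpha) * phiM (A z0) \<zeta> powr (- alpha))
        in \<forall>z \<in> hball z0 eps0 \<inter> \<Omega>. \<forall>\<zeta>. \<zeta> \<noteq> 0 \<longrightarrow> - trace (A z ** hhess g \<zeta>) \<ge> 0)"
proof -
  define tol where "tol = perturbation_tolerance lam Lam delta (real CARD('n))"
  have "0 < tol" using perturbation_tolerance_pos lam delta by (simp add: tol_def)
  hence "\<forall>\<^sub>F e in at_right 0. w e < tol"
    using w by (auto simp: admissible_modulus_def intro: order_tendstoD)
  then obtain b where b: "b > 0" "\<forall>y>0. y < b \<longrightarrow> w y < tol"
    by (auto simp: eventually_at_right_field)
  define e where "e = min (b / 2) (1 / 2)"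
  have e: "0 < e" "e < 1" "w e < tol" using b by (auto simp: e_def)
  show ?thesis
    by (intro exI[of _ e] conjI allI impI; (rule neg_trace_hhess_phiM_power_nonneg_on_hball[of lam Lam])?)
      (use e lam Lam delta in \<open>auto simp: tol_def Cclass_def intro: order_trans[OF _ less_imp_le]\<close>)
qed

theorem lemma3p6:
  fixes lam Lam delta :: real
  assumes "0 < delta" "delta < 1/2" "0 < lam" "lam \<le> 1" "1 \<le> Lam"
  shows
   "(\<forall>w :: real \<Rightarrow> real. \<exists>eps0 > 0. \<forall>(\<Omega> :: 'n::finite hpoint set) A z0.
       open \<Omega> \<and> z0 \<in> \<Omega> \<and> Mclass lam Lam \<Omega> A \<and> continuous (at z0 within \<Omega>) A
       \<and> symplectic (A z0) \<and> (\<forall>e>0. modcont A \<Omega> z0 e = w e) \<longrightarrow>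
       (let alpha = (Qdim TYPE('n) - 2) / 4 + delta;
            g = (\<lambda>\<zeta>. - (1 / alpha) * phiM (A z0) \<zeta> powr (- alpha))
        in \<forall>z \<in> hball z0 eps0 \<inter> \<Omega>. \<forall>\<zeta>. \<zeta> \<noteq> 0 \<longrightarrow> - trace (A z ** hhess g \<zeta>) \<ge> 0))
  \<and> (\<forall>w :: real \<Rightarrow> real. admissible_modulus w \<longrightarrow> (\<exists>eps0 > 0. \<forall>(\<Omega> :: 'n hpoint set) A z0.
       open \<Omega> \<and> z0 \<in> \<Omega> \<and> Mclass lam Lam \<Omega> A \<and> Cclass \<Omega> w A
       \<and> symplectic (A z0) \<longrightarrow>
       (let alpha = (Qdim TYPE('n) - 2) / 4 + delta;
            g = (\<lambda>\<zeta>. - (1 / alpha) * phiM (A z0) \<zeta> powr (- alpha))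
        in \<forall>z \<in> hball z0 eps0 \<inter> \<Omega>. \<forall>\<zeta>. \<zeta> \<noteq> 0 \<longrightarrow> - trace (A z ** hhess g \<zeta>) \<ge> 0)))"
proof -
  show ?thesis
    by (intro conjI allI impI ex_radius_for_modulus ex_uniform_radius_for_admissible_modulus)
      (use assms in auto)
qed

end
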